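(* Let $\mathscr{P}$ be a stationary ergodic stochastic process over a finite alphabet $\Sigma$ whose set $\overline{Q}^+$ of atomic accumulation causal states is finite and satisfies $\sum_{\nu\in\overline{Q}^+}p(\nu)=1$. Then the process generated by the PFSA $G=(\Sigma,\overline{Q}^+,\delta,\tilde\pi)$ with $\delta(\nu,\sigma)=\nu_\sigma$ and $\tilde\pi(\nu,\sigma)=\nu(\sigma\Sigma^\omega)$ is exactly $\mathscr{P}$; in fact the stationary distribution $\mathbf{p}_G$ of $G$ satisfies $\mathbf{p}_G(\nu)=p(\nu)$ for all $\nu\in\overline{Q}^+$.
   Context: $\mathcal{M}_\Sigma$ denotes the set of probability measures on $\Sigma^\omega$ with the $\sigma$-field generated by the cylinders $x\Sigma^\omega$. For $x=\sigma_1\cdots\sigma_n$, $Pr(x)=Pr(X_1\cdots X_n=\sigma_1\cdots\sigma_n)$; for $Pr(x)>0$, $\mu_x(y\Sigma^\omega)=Pr(xy)/Pr(x)$; causal states are classes $[x]$ (with $Pr(x)>0$) under $x\sim y\iff\mu_x=\mu_y$, $\mu_{[x]}=\mu_x$. For $\nu\in\mathcal{M}_\Sigma$: $B_{d,\varepsilon}(\nu)=\{\nu':\sum_{x\in\Sigma^d}|\nu'(x\Sigma^\omega)-\nu(x\Sigma^\omega)|<\varepsilon\}$; $p_{l,d,\varepsilon}(\nu)=\sum\{Pr(x):x\in\Sigma^l,Pr(x)>0,\mu_{[x]}\in B_{d,\varepsilon}(\nu)\}$; $\nu$ is an accumulation causal state if $p_{d,\varepsilon}(\nu)=\liminf_{l\to\infty}p_{l,d,\varepsilon}(\nu)>0$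 for all $d\in\mathbb{N}^+,\varepsilon>0$; $p(\nu)=\lim_{d\to\infty}\lim_{\varepsilon\to0}p_{d,\varepsilon}(\nu)$; $\overline{Q}^+$ is the set of accumulation causal states with $p(\nu)>0$. Translation: $\nu_\sigma(x\Sigma^\omega)=\nu(\sigma x\Sigma^\omega)/\nu(\sigma\Sigma^\omega)$ for $\nu(\sigma\Sigma^\omega)>0$ ($\delta(\nu,\sigma)$ undefined otherwise). A PFSA $(\Sigma,Q,\delta,\tilde\pi)$ emits $\sigma$ from state $q$ with probability $\tilde\pi(q,\sigma)$ and moves to $\delta(q,\sigma)$; its initial state is drawn from the stationary distribution $\mathbf{p}_G$ of the transition matrix $\pi(q,q')=\sum_{\sigma:\delta(q,\sigma)=q'}\tilde\pi(q,\sigma)$. *)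

theory Defs
  imports "HOL-Probability.Probability"
begin

text \<open>The sequence space \<Sigma>^\<omega> with the sigma-field generated by cylinders
  (product sigma-field on streams over the discrete finite alphabet).\<close>
abbreviation SS :: "'a stream measure" where
  "SS \<equiv> stream_space (count_space UNIV)"

definition cyl :: "'a list \<Rightarrow> 'a stream set" where
  "cyl x = {\<omega> \<in> space SS. stake (length x) \<omega> = x}"

definition seq_prob :: "'a stream measure \<Rightarrow> bool" where
  "seq_prob \<nu> \<longleftrightarrow> prob_space \<nu> \<and> sets \<nu> = sets SS"

definition Pr :: "'a stream measure \<Rightarrow> 'a list \<Rightarrow> real" where
  "Pr M x = measure M (cyl x)"

text \<open>Future measure \<mu>_x: conditioning on the cylinder x\<Sigma>^\<omega> and shifting away x,
  so that \<mu>_x(y\<Sigma>^\<omega>) = Pr(xy)/Pr(x).  The translation \<nu>_\<sigma> is \<open>future \<nu> [\<sigma>]\<close>.\<close>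
definition future :: "'a stream measure \<Rightarrow> 'a list \<Rightarrow> 'a stream measure" where
  "future M x = distr (uniform_measure M (cyl x)) SS (sdrop (length x))"

definition stationary_proc :: "'a stream measure \<Rightarrow> bool" where
  "stationary_proc M \<longleftrightarrow> distr M SS stl = M"

definition ergodic_proc :: "'a stream measure \<Rightarrow> bool" where
  "ergodic_proc M \<longleftrightarrow>
     (\<forall>A \<in> sets M. stl -` A \<inter> space M = A \<longrightarrow> measure M A = 0 \<or> measure M A = 1)"

definition ball_de :: "nat \<Rightarrow> real \<Rightarrow> 'a stream measure \<Rightarrow> 'a stream measure set" where
  "ball_de d \<epsilon> \<nu> = {\<nu>'. seq_prob \<nu>' \<and>
      (\<Sum>x\<in>{xs::'a list. length xs = d}. \<bar>Pr \<nu>' x - Pr \<nu> x\<bar>) < \<epsilon>}"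

definition p_lde :: "'a stream measure \<Rightarrow> nat \<Rightarrow> nat \<Rightarrow> real \<Rightarrow> 'a stream measure \<Rightarrow> real" where
  "p_lde M l d \<epsilon> \<nu> = (\<Sum>x\<in>{xs::'a list. length xs = l \<and> Pr M xs > 0 \<and> future M xs \<in> ball_de d \<epsilon> \<nu>}. Pr M x)"

definition p_de :: "'a stream measure \<Rightarrow> nat \<Rightarrow> real \<Rightarrow> 'a stream measure \<Rightarrow> ereal" where
  "p_de M d \<epsilon> \<nu> = liminf (\<lambda>l. ereal (p_lde M l d \<epsilon> \<nu>))"

definition accumulation_state :: "'a stream measure \<Rightarrow> 'a stream measure \<Rightarrow> bool" where
  "accumulation_state M \<nu> \<longleftrightarrow> seq_prob \<nu> \<and>
     (\<forall>d::nat. d \<ge> 1 \<longrightarrow> (\<forall>\<epsilon>>0. p_de M d \<epsilon> \<nu> > 0))"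

definition p_nu :: "'a stream measure \<Rightarrow> 'a stream measure \<Rightarrow> real" where
  "p_nu M \<nu> = lim (\<lambda>d. Lim (at_right 0) (\<lambda>\<epsilon>. real_of_ereal (p_de M d \<epsilon> \<nu>)))"

definition Qplus :: "'a stream measure \<Rightarrow> 'a stream measure set" where
  "Qplus M = {\<nu>. accumulation_state M \<nu> \<and> p_nu M \<nu> > 0}"

fun word_prob :: "('q \<Rightarrow> 'a \<Rightarrow> 'q) \<Rightarrow> ('q \<Rightarrow> 'a \<Rightarrow> real) \<Rightarrow> 'q \<Rightarrow> 'a list \<Rightarrow> real" where
  "word_prob \<delta> \<pi>t q [] = 1"
| "word_prob \<delta> \<pi>t q (\<sigma> # x) = \<pi>t q \<sigma> * word_prob \<delta> \<pi>t (\<delta> q \<sigma>) x"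

definition trans_mat :: "('q \<Rightarrow> 'a::finite \<Rightarrow> 'q) \<Rightarrow> ('q \<Rightarrow> 'a \<Rightarrow> real) \<Rightarrow> 'q \<Rightarrow> 'q \<Rightarrow> real" where
  "trans_mat \<delta> \<pi>t q q' = (\<Sum>\<sigma>\<in>{\<sigma>. \<delta> q \<sigma> = q'}. \<pi>t q \<sigma>)"

definition stationary_dist :: "'q set \<Rightarrow> ('q \<Rightarrow> 'q \<Rightarrow> real) \<Rightarrow> ('q \<Rightarrow> real) \<Rightarrow> bool" where
  "stationary_dist Q P p \<longleftrightarrow> (\<forall>q\<in>Q. p q \<ge> 0) \<and> (\<Sum>q\<in>Q. p q) = 1 \<and>
     (\<forall>q'\<in>Q. (\<Sum>q\<in>Q. p q * P q q') = p q')"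

definition G_delta :: "'a stream measure \<Rightarrow> 'a \<Rightarrow> 'a stream measure" where
  "G_delta \<nu> \<sigma> = future \<nu> [\<sigma>]"

definition G_pit :: "'a stream measure \<Rightarrow> 'a \<Rightarrow> real" where
  "G_pit \<nu> \<sigma> = Pr \<nu> [\<sigma>]"

end

theory Submission
  imports Defs
begin

text \<open>
  A word whose causal state is within \<open>\<epsilon>'\<close> of \<open>\<nu>\<close> at depth \<open>d + 1\<close> continues with \<open>\<sigma>\<close> with
  conditional probability at least \<open>\<nu>(\<sigma>) - \<epsilon>'\<close>, and the causal state of the extended word is then
  within \<open>\<epsilon>\<close> of the translate \<open>\<nu>\<^sub>\<sigma>\<close> at depth \<open>d\<close>.  Distinct states of the finite set \<open>Q\<close> of
  accumulation causal states are uniformly separated in the cylinder distance, so for small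
  tolerances their neighbourhoods contain disjoint sets of words.  Summing, taking the \<open>liminf\<close>
  over the word length and letting the tolerances go to \<open>0\<close> gives
  \<open>p(\<nu>') \<ge> \<Sum>\<^sub>\<nu> p(\<nu>) \<pi>(\<nu>,\<nu>')\<close> for every \<open>\<nu>'\<close>.  In particular \<open>Q\<close> is closed under
  translation, so both sides have total mass \<open>1\<close> on \<open>Q\<close> and the inequality is an equality.
  Likewise stationarity gives \<open>Pr(x) = \<Sum>\<^bsub>|y| = l\<^esub> Pr(yx) \<ge> \<Sum>\<^sub>\<nu> (\<nu>(x) - \<epsilon>) p\<^bsub>l,d,\<epsilon>\<^esub>(\<nu>)\<close>,
  hence \<open>Pr(x) \<ge> \<Sum>\<^sub>\<nu> p(\<nu>) \<nu>(x)\<close>, with equality since both sides sum to \<open>1\<close> over the words of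
  each length.  Finally, the automaton started in \<open>\<nu>\<close> emits \<open>x\<close> with probability \<open>\<nu>(x)\<close>.
\<close>

section \<open>Sums over words and lower limits\<close>

lemma finite_lists_length_eq_UNIV: "finite {xs :: 'a::finite list. length xs = n}"
  using finite_lists_length_eq[of "UNIV :: 'a set" n] by simp

lemma sum_length_eq_append:
  fixes f :: "'a::finite list \<Rightarrow> 'b::comm_monoid_add"
  shows "(\<Sum>x\<in>{x. length x = d}. \<Sum>w\<in>{w. length w = k}. f (x @ w)) = (\<Sum>z\<in>{z. length z = d + k}. f z)"
proof -
  have "(\<Sum>x\<in>{x. length x = d}. \<Sum>w\<in>{w. length w = k}. f (x @ w)) =
        (\<Sum>(x, w)\<in>{x. length x = d} \<times> {w. length w = k}. f (x @ w))"
    by (simp add: sum.cartesian_product)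
  also have "\<dots> = (\<Sum>z\<in>{z. length z = d + k}. f z)"
    by (rule sum.reindex_bij_witness[where i="\<lambda>z. (take d z, drop d z)" and j="\<lambda>(x, w). x @ w"])
       auto
  finally show ?thesis .
qed

lemma sum_letters_eq_sum_length_1:
  "(\<Sum>\<sigma>\<in>UNIV. f [\<sigma>]) = (\<Sum>w\<in>{w. length w = 1}. f w)"
  by (rule sum.reindex_bij_witness[where i=hd and j="\<lambda>\<sigma>. [\<sigma>]"]) (auto simp: length_Suc_conv)

lemma sum_length_eq_snoc:
  fixes f :: "'a::finite list \<Rightarrow> 'b::comm_monoid_add"
  shows "(\<Sum>y\<in>{y. length y = l}. \<Sum>\<sigma>\<in>UNIV. f (y @ [\<sigma>])) = (\<Sum>z\<in>{z. length z = Suc l}. f z)"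
  using sum_length_eq_append[where f=f and d=l and k=1]
  by (simp add: sum_letters_eq_sum_length_1[of "\<lambda>w. f (_ @ w)"])

lemma abs_divide_diff_le:
  fixes a b A B :: real
  assumes "0 < a" "0 < b" "0 \<le> B"
  shows "\<bar>A / a - B / b\<bar> \<le> \<bar>A - B\<bar> / a + B * (\<bar>b - a\<bar> / (a * b))"
proof -
  have "A / a - B / b = (A - B) / a + B * ((b - a) / (a * b))"
    using assms(1,2) by (simp add: field_simps)
  then show ?thesis
    using assms by (simp add: abs_mult abs_triangle_ineq[THEN order_trans])
qed

lemma tendsto_INF_at_right:
  fixes f :: "real \<Rightarrow> 'a::{complete_linorder, linorder_topology}"
  assumes mono: "\<And>x y. a < x \<Longrightarrow> x \<le> y \<Longrightarrow> f x \<le> f y"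
  shows "(f \<longlongrightarrow> (INF x\<in>{a<..}. f x)) (at_right a)"
proof (rule order_tendstoI)
  fix c assume "c < (INF x\<in>{a<..}. f x)"
  then have above: "c < f x" if "a < x" for x
    using that by (meson INF_lower greaterThan_iff less_le_trans)
  show "eventually (\<lambda>x. c < f x) (at_right a)"
    by (rule eventually_mono[OF eventually_at_right_less above])
next
  fix c assume "(INF x\<in>{a<..}. f x) < c"
  then obtain x0 where "a < x0" "f x0 < c"
    by (auto simp: INF_less_iff)
  then show "eventually (\<lambda>x. f x < c) (at_right a)"
    unfolding eventually_at_right_field
    by (intro exI[of _ x0]) (meson mono less_imp_le le_less_trans)
qed

lemma sum_liminf_le_liminf_sum:
  fixes f :: "'i \<Rightarrow> nat \<Rightarrow> ereal"
  assumes "\<And>i l. i \<in> I \<Longrightarrow> 0 \<le> f i l"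
  shows "(\<Sum>i\<in>I. liminf (f i)) \<le> liminf (\<lambda>l. \<Sum>i\<in>I. f i l)"
  using assms
proof (induction I rule: infinite_finite_induct)
  case (insert i I)
  have "(\<Sum>j\<in>insert i I. liminf (f j)) \<le> liminf (f i) + liminf (\<lambda>l. \<Sum>j\<in>I. f j l)"
    using insert by (simp add: add_left_mono)
  also have "\<dots> \<le> liminf (\<lambda>l. f i l + (\<Sum>j\<in>I. f j l))"
    using insert.prems by (intro Liminf_add_le) (simp_all add: sum_nonneg)
  finally show ?case using insert by simp
qed (simp_all add: Liminf_const)

lemma ereal_sum_mult_le_liminf:
  fixes b :: "'i \<Rightarrow> nat \<Rightarrow> real"
  assumes "\<And>i. i \<in> I \<Longrightarrow> 0 \<le> c i" "\<And>i l. i \<in> I \<Longrightarrow> 0 \<le> b i l"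
    and "\<And>i. i \<in> I \<Longrightarrow> ereal (r i) \<le> liminf (\<lambda>l. ereal (b i l))"
    and "\<And>l. (\<Sum>i\<in>I. c i * b i l) \<le> a l"
  shows "ereal (\<Sum>i\<in>I. c i * r i) \<le> liminf (\<lambda>l. ereal (a l))"
proof -
  have "ereal (\<Sum>i\<in>I. c i * r i) = (\<Sum>i\<in>I. ereal (c i) * ereal (r i))"
    by simp
  also have "\<dots> \<le> (\<Sum>i\<in>I. ereal (c i) * liminf (\<lambda>l. ereal (b i l)))"
    using assms(1,3) by (intro sum_mono ereal_mult_left_mono) simp_all
  also have "\<dots> = (\<Sum>i\<in>I. liminf (\<lambda>l. ereal (c i) * ereal (b i l)))"
    using assms(1) by (intro sum.cong refl Liminf_ereal_mult_left[symmetric]) simp_all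
  also have "\<dots> \<le> liminf (\<lambda>l. \<Sum>i\<in>I. ereal (c i) * ereal (b i l))"
    using assms(1,2) by (intro sum_liminf_le_liminf_sum) simp
  also have "\<dots> \<le> liminf (\<lambda>l. ereal (a l))"
    using assms(4) by (intro Liminf_mono) simp
  finally show ?thesis .
qed

section \<open>Cylinders and word probabilities\<close>

lemma space_SS: "space SS = UNIV"
  by (simp add: space_stream_space streams_UNIV)

lemma mem_cyl_iff: "\<omega> \<in> cyl x \<longleftrightarrow> stake (length x) \<omega> = x"
  by (simp add: cyl_def space_SS)

lemma stake_eq_iff_sstart: "stake (length x) \<omega> = x \<longleftrightarrow> \<omega> \<in> sstart UNIV x"
proof (induction x arbitrary: \<omega>)
  case Nil
  then show ?case by (simp add: streams_UNIV)
next
  case (Cons a x)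
  then show ?case by (cases \<omega>) auto
qed

lemma cyl_eq_sstart: "cyl x = sstart UNIV x"
  by (simp add: set_eq_iff mem_cyl_iff stake_eq_iff_sstart)

lemma sets_cyl [measurable]: "cyl x \<in> sets SS"
  by (simp add: cyl_eq_sstart sets_sstart)

lemma cyl_Nil: "cyl [] = UNIV"
  by (auto simp: mem_cyl_iff)

lemma mem_cyl_append_iff: "\<omega> \<in> cyl (x @ y) \<longleftrightarrow> \<omega> \<in> cyl x \<and> sdrop (length x) \<omega> \<in> cyl y"
proof -
  have "stake (length (x @ y)) \<omega> = stake (length x) \<omega> @ stake (length y) (sdrop (length x) \<omega>)"
    by simp
  then show ?thesis
    by (metis mem_cyl_iff append_eq_append_conv length_stake)
qed

lemma seq_probD: "seq_prob \<nu> \<Longrightarrow> prob_space \<nu>" "seq_prob \<nu> \<Longrightarrow> sets \<nu> = sets SS"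
  by (auto simp: seq_prob_def)

lemma space_seq_prob: "seq_prob \<nu> \<Longrightarrow> space \<nu> = UNIV"
  using sets_eq_imp_space_eq[of \<nu> SS] by (simp add: seq_prob_def space_SS)

lemma Pr_nonneg: "0 \<le> Pr \<nu> x"
  by (simp add: Pr_def)

lemma Pr_Nil:
  assumes "seq_prob \<nu>"
  shows "Pr \<nu> [] = 1"
  using prob_space.prob_space[OF seq_probD(1)[OF assms]]
  by (simp add: Pr_def cyl_Nil space_seq_prob[OF assms])

lemma measure_UN_cyl:
  assumes "seq_prob \<nu>" "finite A" "inj_on f A" "\<And>a. a \<in> A \<Longrightarrow> length (f a) = n"
  shows "measure \<nu> (\<Union>a\<in>A. cyl (f a)) = (\<Sum>a\<in>A. Pr \<nu> (f a))"
proof -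
  interpret prob_space \<nu> using assms(1) by (rule seq_probD)
  have "cyl (f a) \<inter> cyl (f b) = {}" if "a \<in> A" "b \<in> A" "a \<noteq> b" for a b
  proof -
    have "f a \<noteq> f b" using assms(3) that by (meson inj_onD)
    then show ?thesis
      using assms(4)[OF that(1)] assms(4)[OF that(2)] by (auto simp: mem_cyl_iff)
  qed
  then have "disjoint_family_on (\<lambda>a. cyl (f a)) A"
    by (simp add: disjoint_family_on_def)
  moreover have "(\<lambda>a. cyl (f a)) ` A \<subseteq> sets \<nu>"
    using sets_cyl seq_probD(2)[OF assms(1)] by blast
  ultimately show ?thesis
    unfolding Pr_def by (intro finite_measure_finite_Union assms(2))
qed

lemma Pr_eq_sum_append:
  fixes x :: "'a::finite list"
  assumes "seq_prob \<nu>"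
  shows "Pr \<nu> x = (\<Sum>w\<in>{w. length w = n}. Pr \<nu> (x @ w))"
proof -
  have "cyl x = (\<Union>w\<in>{w. length w = n}. cyl (x @ w))"
  proof (intro set_eqI iffI)
    fix \<omega> assume "\<omega> \<in> cyl x"
    then have "\<omega> \<in> cyl (x @ stake n (sdrop (length x) \<omega>))"
      unfolding mem_cyl_append_iff by (simp add: mem_cyl_iff)
    then show "\<omega> \<in> (\<Union>w\<in>{w. length w = n}. cyl (x @ w))"
      by (intro UN_I[of "stake n (sdrop (length x) \<omega>)"]) simp_all
  qed (auto simp: mem_cyl_append_iff)
  then have "Pr \<nu> x = measure \<nu> (\<Union>w\<in>{w. length w = n}. cyl (x @ w))"
    by (simp add: Pr_def)
  also have "\<dots> = (\<Sum>w\<in>{w. length w = n}. Pr \<nu> (x @ w))"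
    by (rule measure_UN_cyl[OF assms finite_lists_length_eq_UNIV]) (simp_all add: inj_on_def)
  finally show ?thesis .
qed

lemma sum_Pr_length_eq:
  fixes \<nu> :: "'a::finite stream measure"
  assumes "seq_prob \<nu>"
  shows "(\<Sum>w\<in>{w. length w = n}. Pr \<nu> w) = 1"
  using Pr_eq_sum_append[OF assms, of "[]" n] by (simp add: Pr_Nil[OF assms])

lemma sum_Pr_letters:
  fixes \<nu> :: "'a::finite stream measure"
  assumes "seq_prob \<nu>"
  shows "(\<Sum>\<sigma>\<in>UNIV. Pr \<nu> [\<sigma>]) = 1"
  using sum_letters_eq_sum_length_1[of "Pr \<nu>"] sum_Pr_length_eq[OF assms, of 1] by simp

lemma Pr_append_le:
  fixes x :: "'a::finite list"
  assumes "seq_prob \<nu>"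
  shows "Pr \<nu> (x @ y) \<le> Pr \<nu> x"
  unfolding Pr_eq_sum_append[OF assms, of x "length y"]
  by (rule member_le_sum) (auto simp: Pr_nonneg finite_lists_length_eq_UNIV)

lemma distr_sdrop_stationary:
  assumes "seq_prob M" "stationary_proc M"
  shows "distr M SS (sdrop l) = M"
proof (induction l)
  case 0
  have "distr M SS (\<lambda>\<omega>. \<omega>) = M"
    using distr_id2[of SS M] seq_probD(2)[OF assms(1)] by simp
  then show ?case by (simp add: id_def)
next
  case (Suc l)
  have stl: "stl \<in> measurable M SS"
    unfolding measurable_cong_sets[OF seq_probD(2)[OF assms(1)] refl] by measurable
  have "distr M SS (sdrop l \<circ> stl) = distr (distr M SS stl) SS (sdrop l)"
    by (rule distr_distr[OF _ stl, symmetric]) simp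
  also have "\<dots> = M"
    using assms(2) Suc by (simp add: stationary_proc_def)
  finally show ?case
    by (simp add: comp_def sdrop_stl[symmetric])
qed

lemma Pr_eq_sum_prepend:
  fixes x :: "'a::finite list"
  assumes "seq_prob M" "stationary_proc M"
  shows "Pr M x = (\<Sum>y\<in>{y. length y = l}. Pr M (y @ x))"
proof -
  have "sdrop l \<in> measurable M SS"
    unfolding measurable_cong_sets[OF seq_probD(2)[OF assms(1)] refl] by measurable
  then have "Pr M x = measure M (sdrop l -` cyl x)"
    using measure_distr[of "sdrop l" M SS "cyl x"] distr_sdrop_stationary[OF assms, of l]
    by (simp add: Pr_def space_seq_prob[OF assms(1)])
  also have "sdrop l -` cyl x = (\<Union>y\<in>{y. length y = l}. cyl (y @ x))"
  proof (intro set_eqI iffI)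
    fix \<omega> assume "\<omega> \<in> sdrop l -` cyl x"
    then have "\<omega> \<in> cyl (stake l \<omega> @ x)"
      unfolding mem_cyl_append_iff by (simp add: mem_cyl_iff)
    then show "\<omega> \<in> (\<Union>y\<in>{y. length y = l}. cyl (y @ x))"
      by (intro UN_I[of "stake l \<omega>"]) simp_all
  qed (auto simp: mem_cyl_append_iff)
  also have "measure M \<dots> = (\<Sum>y\<in>{y. length y = l}. Pr M (y @ x))"
    by (rule measure_UN_cyl[OF assms(1) finite_lists_length_eq_UNIV]) (simp_all add: inj_on_def)
  finally show ?thesis .
qed

lemma seq_prob_eqI:
  fixes \<mu> :: "'a::finite stream measure"
  assumes "seq_prob \<mu>" "seq_prob \<nu>" "\<And>x. Pr \<mu> x = Pr \<nu> x"
  shows "\<mu> = \<nu>"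
proof (rule stream_space_eq_sstart[of UNIV])
  interpret \<mu>: prob_space \<mu> using assms(1) by (rule seq_probD)
  interpret \<nu>: prob_space \<nu> using assms(2) by (rule seq_probD)
  show "prob_space \<mu>" "prob_space \<nu>" "sets \<mu> = sets SS" "sets \<nu> = sets SS"
    using assms(1,2) by (simp_all add: seq_probD)
  show "AE x in \<mu>. x \<in> streams UNIV" "AE x in \<nu>. x \<in> streams UNIV"
    by (simp_all add: streams_UNIV)
  show "emeasure \<mu> (sstart UNIV xs) = emeasure \<nu> (sstart UNIV xs)" for xs
    using assms(3)[of xs] by (simp add: Pr_def \<mu>.emeasure_eq_measure \<nu>.emeasure_eq_measure flip: cyl_eq_sstart)
qed simp

lemma
  fixes M :: "'a::finite stream measure"
  assumes M: "seq_prob M" and y: "0 < Pr M y"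
  shows seq_prob_future: "seq_prob (future M y)"
    and Pr_future: "Pr (future M y) x = Pr M (y @ x) / Pr M y"
proof -
  interpret prob_space M using M by (rule seq_probD)
  have sets_M: "sets M = sets SS" using M by (rule seq_probD)
  have cyl_y: "emeasure M (cyl y) \<noteq> 0" "emeasure M (cyl y) \<noteq> \<infinity>"
    using y by (simp_all add: Pr_def emeasure_eq_measure)
  define U where "U = uniform_measure M (cyl y)"
  have "prob_space U" unfolding U_def by (rule prob_space_uniform_measure[OF cyl_y])
  moreover have sets_U: "sets U = sets SS" unfolding U_def using sets_M by simp
  ultimately have "seq_prob U" by (simp add: seq_prob_def)
  have sdrop_meas: "sdrop (length y) \<in> measurable U SS"
    unfolding measurable_cong_sets[OF sets_U refl] by measurable
  show "seq_prob (future M y)"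
    using prob_space.prob_space_distr[OF \<open>prob_space U\<close> sdrop_meas]
    by (simp add: seq_prob_def future_def U_def[symmetric])
  have "sdrop (length y) -` cyl x \<in> sets M"
    using measurable_sets[OF measurable_sdrop sets_cyl, of "length y" x] sets_M by (simp add: space_SS)
  moreover have "cyl y \<inter> sdrop (length y) -` cyl x = cyl (y @ x)"
    by (auto simp: mem_cyl_append_iff)
  ultimately have "measure U (sdrop (length y) -` cyl x) = Pr M (y @ x) / Pr M y"
    unfolding U_def by (simp add: measure_uniform_measure[OF cyl_y] Pr_def)
  then show "Pr (future M y) x = Pr M (y @ x) / Pr M y"
    using measure_distr[OF sdrop_meas, of "cyl x"] space_seq_prob[OF \<open>seq_prob U\<close>]
    by (simp add: Pr_def future_def U_def[symmetric])
qed

lemma future_append: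
  fixes M :: "'a::finite stream measure"
  assumes M: "seq_prob M" and yz: "0 < Pr M (y @ z)"
  shows "future M (y @ z) = future (future M y) z"
proof -
  have y: "0 < Pr M y" using Pr_append_le[OF M, of y z] yz by linarith
  have z: "0 < Pr (future M y) z" using yz y by (simp add: Pr_future[OF M])
  show ?thesis
    by (rule seq_prob_eqI)
       (use M y z yz in \<open>simp_all add: seq_prob_future Pr_future\<close>)
qed

lemma word_prob_G_eq_Pr:
  fixes \<nu> :: "'a::finite stream measure"
  assumes "seq_prob \<nu>"
  shows "word_prob G_delta G_pit \<nu> x = Pr \<nu> x"
  using assms
proof (induction x arbitrary: \<nu>)
  case Nil
  then show ?case by (simp add: Pr_Nil)
next
  case (Cons \<sigma> x)
  show ?case
  proof (cases "Pr \<nu> [\<sigma>] = 0")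
    case True
    \<comment> \<open>the successor state \<open>future \<nu> [\<sigma>]\<close> is junk here, but it is weighted by \<open>0\<close>\<close>
    then have "Pr \<nu> (\<sigma> # x) = 0"
      using Pr_append_le[OF Cons.prems, of "[\<sigma>]" x] Pr_nonneg[of \<nu> "\<sigma> # x"] by simp
    with True show ?thesis by (simp add: G_pit_def)
  next
    case False
    then have "0 < Pr \<nu> [\<sigma>]" using Pr_nonneg[of \<nu> "[\<sigma>]"] by linarith
    then show ?thesis
      using Cons.IH[OF seq_prob_future[OF Cons.prems]]
      by (simp add: G_pit_def G_delta_def Pr_future[OF Cons.prems])
  qed
qed

section \<open>The cylinder distance\<close>

definition cyl_dist :: "nat \<Rightarrow> 'a stream measure \<Rightarrow> 'a stream measure \<Rightarrow> real" where
  "cyl_dist d \<mu> \<nu> = (\<Sum>x\<in>{xs. length xs = d}. \<bar>Pr \<mu> x - Pr \<nu> x\<bar>)"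

lemma mem_ball_de_iff: "\<nu>' \<in> ball_de d \<epsilon> \<nu> \<longleftrightarrow> seq_prob \<nu>' \<and> cyl_dist d \<nu>' \<nu> < \<epsilon>"
  by (simp add: ball_de_def cyl_dist_def)

lemma cyl_dist_nonneg: "0 \<le> cyl_dist d \<mu> \<nu>"
  unfolding cyl_dist_def by (rule sum_nonneg) simp

lemma cyl_dist_triangle: "cyl_dist d \<mu> \<nu> \<le> cyl_dist d \<rho> \<mu> + cyl_dist d \<rho> \<nu>"
  unfolding cyl_dist_def sum.distrib[symmetric] by (rule sum_mono) linarith

lemma cyl_dist_mono:
  fixes \<mu> :: "'a::finite stream measure"
  assumes "seq_prob \<mu>" "seq_prob \<nu>" "d \<le> d'"
  shows "cyl_dist d \<mu> \<nu> \<le> cyl_dist d' \<mu> \<nu>"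
proof -
  define k where "k = d' - d"
  have "cyl_dist d \<mu> \<nu>
      = (\<Sum>x\<in>{x. length x = d}. \<bar>\<Sum>w\<in>{w. length w = k}. Pr \<mu> (x @ w) - Pr \<nu> (x @ w)\<bar>)"
    unfolding cyl_dist_def sum_subtractf
    by (simp flip: Pr_eq_sum_append[OF assms(1)] Pr_eq_sum_append[OF assms(2)])
  also have "\<dots> \<le> (\<Sum>x\<in>{x. length x = d}. \<Sum>w\<in>{w. length w = k}. \<bar>Pr \<mu> (x @ w) - Pr \<nu> (x @ w)\<bar>)"
    by (intro sum_mono sum_abs)
  also have "\<dots> = cyl_dist (d + k) \<mu> \<nu>"
    unfolding cyl_dist_def by (rule sum_length_eq_append)
  finally show ?thesis
    using assms(3) by (simp add: k_def)
qed

lemma Pr_diff_le_cyl_dist: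
  fixes \<mu> :: "'a::finite stream measure"
  assumes "seq_prob \<mu>" "seq_prob \<nu>" "length x \<le> d"
  shows "\<bar>Pr \<mu> x - Pr \<nu> x\<bar> \<le> cyl_dist d \<mu> \<nu>"
proof -
  have "\<bar>Pr \<mu> x - Pr \<nu> x\<bar> \<le> cyl_dist (length x) \<mu> \<nu>"
    unfolding cyl_dist_def by (rule member_le_sum) (simp_all add: finite_lists_length_eq_UNIV)
  also have "\<dots> \<le> cyl_dist d \<mu> \<nu>"
    by (rule cyl_dist_mono[OF assms])
  finally show ?thesis .
qed

lemma cyl_dist_pos_if_neq:
  fixes \<mu> :: "'a::finite stream measure"
  assumes "seq_prob \<mu>" "seq_prob \<nu>" "\<mu> \<noteq> \<nu>"
  shows "\<exists>d. 0 < cyl_dist d \<mu> \<nu>"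
proof (rule ccontr)
  assume "\<not> ?thesis"
  then have "cyl_dist d \<mu> \<nu> = 0" for d
    using cyl_dist_nonneg[of d \<mu> \<nu>] by (meson antisym not_less)
  then have "Pr \<mu> x = Pr \<nu> x" for x
    using Pr_diff_le_cyl_dist[OF assms(1,2) order.refl, of x] by simp
  then show False
    using seq_prob_eqI[OF assms(1,2)] assms(3) by blast
qed

lemma cyl_dist_uniformly_pos:
  fixes Q :: "'a::finite stream measure set"
  assumes "finite Q" "\<And>\<nu>. \<nu> \<in> Q \<Longrightarrow> seq_prob \<nu>"
  obtains D \<delta> where "0 < \<delta>"
    "\<And>\<mu> \<nu> d. \<mu> \<in> Q \<Longrightarrow> \<nu> \<in> Q \<Longrightarrow> \<mu> \<noteq> \<nu> \<Longrightarrow> D \<le> d \<Longrightarrow> \<delta> \<le> cyl_dist d \<mu> \<nu>"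
proof -
  have "eventually (\<lambda>d. \<mu> \<noteq> \<nu> \<longrightarrow> 0 < cyl_dist d \<mu> \<nu>) sequentially"
    if \<mu>\<nu>: "\<mu> \<in> Q" "\<nu> \<in> Q" for \<mu> \<nu>
  proof (cases "\<mu> = \<nu>")
    case False
    then obtain d0 where "0 < cyl_dist d0 \<mu> \<nu>"
      using cyl_dist_pos_if_neq assms(2) \<mu>\<nu> by blast
    then show ?thesis
      using cyl_dist_mono[OF assms(2)[OF \<mu>\<nu>(1)] assms(2)[OF \<mu>\<nu>(2)]]
      by (intro eventually_sequentiallyI[of d0]) (meson less_le_trans)
  qed simp
  then have "eventually (\<lambda>d. \<forall>\<mu>\<in>Q. \<forall>\<nu>\<in>Q. \<mu> \<noteq> \<nu> \<longrightarrow> 0 < cyl_dist d \<mu> \<nu>) sequentially"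
    by (simp add: eventually_ball_finite_distrib assms(1))
  then obtain D where "\<forall>d\<ge>D. \<forall>\<mu>\<in>Q. \<forall>\<nu>\<in>Q. \<mu> \<noteq> \<nu> \<longrightarrow> 0 < cyl_dist d \<mu> \<nu>"
    unfolding eventually_sequentially by blast
  then have pos: "0 < cyl_dist D \<mu> \<nu>" if "\<mu> \<in> Q" "\<nu> \<in> Q" "\<mu> \<noteq> \<nu>" for \<mu> \<nu>
    using that by simp
  define C where "C = {cyl_dist D \<mu> \<nu> | \<mu> \<nu>. \<mu> \<in> Q \<and> \<nu> \<in> Q \<and> \<mu> \<noteq> \<nu>}"
  have "finite C"
    unfolding C_def
    by (rule finite_subset[OF _ finite_image_set2[of "\<lambda>\<mu>. \<mu> \<in> Q" "\<lambda>\<nu>. \<nu> \<in> Q" "cyl_dist D"]])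
       (use assms(1) in auto)
  show ?thesis
  proof
    show "0 < Min (insert 1 C)"
      using \<open>finite C\<close> pos by (subst Min_gr_iff) (auto simp: C_def)
    fix \<mu> \<nu> d assume "\<mu> \<in> Q" "\<nu> \<in> Q" "\<mu> \<noteq> \<nu>" "D \<le> d"
    then have "Min (insert 1 C) \<le> cyl_dist D \<mu> \<nu>"
      using \<open>finite C\<close> by (intro Min_le) (auto simp: C_def)
    also have "\<dots> \<le> cyl_dist d \<mu> \<nu>"
      using \<open>\<mu> \<in> Q\<close> \<open>\<nu> \<in> Q\<close> \<open>D \<le> d\<close> by (intro cyl_dist_mono assms(2))
    finally show "Min (insert 1 C) \<le> cyl_dist d \<mu> \<nu>" .
  qed
qed

lemma cyl_dist_future_Cons_le:
  fixes \<mu> :: "'a::finite stream measure"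
  assumes \<mu>: "seq_prob \<mu>" "0 < Pr \<mu> [\<sigma>]" and \<nu>: "seq_prob \<nu>" "0 < Pr \<nu> [\<sigma>]"
  shows "cyl_dist d (future \<mu> [\<sigma>]) (future \<nu> [\<sigma>]) \<le> 2 * cyl_dist (Suc d) \<mu> \<nu> / Pr \<mu> [\<sigma>]"
proof -
  define a b where "a = Pr \<mu> [\<sigma>]" and "b = Pr \<nu> [\<sigma>]"
  define W where "W = {w :: 'a list. length w = d}"
  define \<Delta> where "\<Delta> = (\<Sum>w\<in>W. \<bar>Pr \<mu> (\<sigma> # w) - Pr \<nu> (\<sigma> # w)\<bar>)"
  have "a > 0" "b > 0" using \<mu>(2) \<nu>(2) by (simp_all add: a_def b_def)
  have \<Delta>_le: "\<Delta> \<le> cyl_dist (Suc d) \<mu> \<nu>"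
  proof -
    have "\<Delta> = (\<Sum>z\<in>(\<lambda>w. \<sigma> # w) ` W. \<bar>Pr \<mu> z - Pr \<nu> z\<bar>)"
      unfolding \<Delta>_def by (simp add: sum.reindex)
    also have "\<dots> \<le> cyl_dist (Suc d) \<mu> \<nu>"
      unfolding cyl_dist_def W_def
      by (rule sum_mono2[OF finite_lists_length_eq_UNIV]) auto
    finally show ?thesis .
  qed
  have sum_a: "(\<Sum>w\<in>W. Pr \<mu> (\<sigma> # w)) = a" and sum_b: "(\<Sum>w\<in>W. Pr \<nu> (\<sigma> # w)) = b"
    using Pr_eq_sum_append[OF \<mu>(1), of "[\<sigma>]" d] Pr_eq_sum_append[OF \<nu>(1), of "[\<sigma>]" d]
    by (simp_all add: a_def b_def W_def)
  have "\<bar>b - a\<bar> = \<bar>\<Sum>w\<in>W. Pr \<mu> (\<sigma> # w) - Pr \<nu> (\<sigma> # w)\<bar>"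
    by (simp add: sum_subtractf sum_a sum_b abs_minus_commute)
  also have "\<dots> \<le> \<Delta>" unfolding \<Delta>_def by (rule sum_abs)
  finally have ba: "\<bar>b - a\<bar> \<le> \<Delta>" .
  have "cyl_dist d (future \<mu> [\<sigma>]) (future \<nu> [\<sigma>])
      \<le> (\<Sum>w\<in>W. \<bar>Pr \<mu> (\<sigma> # w) - Pr \<nu> (\<sigma> # w)\<bar> / a + Pr \<nu> (\<sigma> # w) * (\<bar>b - a\<bar> / (a * b)))"
    unfolding cyl_dist_def W_def[symmetric] Pr_future[OF \<mu>] Pr_future[OF \<nu>] append_Cons append_Nil a_def b_def
    by (intro sum_mono abs_divide_diff_le \<mu>(2) \<nu>(2) Pr_nonneg)
  also have "\<dots> = \<Delta> / a + b * (\<bar>b - a\<bar> / (a * b))"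
    unfolding sum.distrib \<Delta>_def sum_divide_distrib[symmetric] sum_distrib_right[symmetric] sum_b ..
  also have "\<dots> = \<Delta> / a + \<bar>b - a\<bar> / a"
    using \<open>b > 0\<close> by simp
  also have "\<dots> = (\<Delta> + \<bar>b - a\<bar>) / a"
    by (simp add: add_divide_distrib)
  also have "\<dots> \<le> 2 * cyl_dist (Suc d) \<mu> \<nu> / a"
    using \<Delta>_le ba \<open>a > 0\<close> by (intro divide_right_mono) auto
  finally show ?thesis unfolding a_def .
qed

section \<open>The weights of causal states\<close>

definition near_words :: "'a stream measure \<Rightarrow> nat \<Rightarrow> nat \<Rightarrow> real \<Rightarrow> 'a stream measure \<Rightarrow> 'a list set" where
  "near_words M l d \<epsilon> \<nu> = {xs. length xs = l \<and> 0 < Pr M xs \<and> future M xs \<in> ball_de d \<epsilon> \<nu>}"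

lemma mem_near_words_iff:
  "y \<in> near_words M l d \<epsilon> \<nu> \<longleftrightarrow>
     length y = l \<and> 0 < Pr M y \<and> seq_prob (future M y) \<and> cyl_dist d (future M y) \<nu> < \<epsilon>"
  by (simp add: near_words_def mem_ball_de_iff)

lemma p_lde_eq_sum_near_words: "p_lde M l d \<epsilon> \<nu> = (\<Sum>y\<in>near_words M l d \<epsilon> \<nu>. Pr M y)"
  by (simp add: p_lde_def near_words_def)

lemma finite_near_words: "finite (near_words (M :: 'a::finite stream measure) l d \<epsilon> \<nu>)"
  by (rule finite_subset[OF _ finite_lists_length_eq_UNIV[of l]]) (auto simp: near_words_def)

lemma near_words_mono:
  fixes \<nu> :: "'a::finite stream measure"
  assumes "seq_prob \<nu>" "d \<le> d'" "\<epsilon>' \<le> \<epsilon>"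
  shows "near_words M l d' \<epsilon>' \<nu> \<subseteq> near_words M l d \<epsilon> \<nu>"
proof
  fix y assume "y \<in> near_words M l d' \<epsilon>' \<nu>"
  then have y: "length y = l" "0 < Pr M y" "seq_prob (future M y)" "cyl_dist d' (future M y) \<nu> < \<epsilon>'"
    by (simp_all add: mem_near_words_iff)
  have "cyl_dist d (future M y) \<nu> \<le> cyl_dist d' (future M y) \<nu>"
    using y(3) assms(1,2) by (rule cyl_dist_mono)
  then show "y \<in> near_words M l d \<epsilon> \<nu>"
    using y assms(3) by (simp add: mem_near_words_iff)
qed

lemma near_words_disjoint:
  assumes "2 * \<epsilon> \<le> cyl_dist d \<mu> \<nu>"
  shows "near_words M l d \<epsilon> \<mu> \<inter> near_words M l d \<epsilon> \<nu> = {}"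
proof -
  have False if "cyl_dist d (future M y) \<mu> < \<epsilon>" "cyl_dist d (future M y) \<nu> < \<epsilon>" for y
    using cyl_dist_triangle[of d \<mu> \<nu> "future M y"] that assms by linarith
  then show ?thesis by (auto simp: mem_near_words_iff)
qed

lemma near_words_disjoint_family:
  fixes Q :: "'a::finite stream measure set"
  assumes "finite Q" "\<And>\<nu>. \<nu> \<in> Q \<Longrightarrow> seq_prob \<nu>"
  obtains D \<epsilon>0 where "0 < \<epsilon>0"
    "\<And>M l d \<epsilon>. D \<le> d \<Longrightarrow> \<epsilon> \<le> \<epsilon>0 \<Longrightarrow> disjoint_family_on (near_words M l d \<epsilon>) Q"
proof -
  obtain \<delta> D where "0 < \<delta>" and sep:
    "\<And>\<mu> \<nu> d. \<mu> \<in> Q \<Longrightarrow> \<nu> \<in> Q \<Longrightarrow> \<mu> \<noteq> \<nu> \<Longrightarrow> D \<le> d \<Longrightarrow> \<delta> \<le> cyl_dist d \<mu> \<nu>"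
    using cyl_dist_uniformly_pos[OF assms] by metis
  show ?thesis
  proof
    show "0 < \<delta> / 2" using \<open>0 < \<delta>\<close> by simp
    show "disjoint_family_on (near_words M l d \<epsilon>) Q" if "D \<le> d" "\<epsilon> \<le> \<delta> / 2" for M l d \<epsilon>
      unfolding disjoint_family_on_def
    proof (intro ballI impI near_words_disjoint)
      fix \<mu> \<nu> assume "\<mu> \<in> Q" "\<nu> \<in> Q" "\<mu> \<noteq> \<nu>"
      then have "\<delta> \<le> cyl_dist d \<mu> \<nu>" using \<open>D \<le> d\<close> by (rule sep)
      then show "2 * \<epsilon> \<le> cyl_dist d \<mu> \<nu>" using \<open>\<epsilon> \<le> \<delta> / 2\<close> by linarith
    qed
  qed
qed

lemma p_lde_nonneg: "0 \<le> p_lde M l d \<epsilon> \<nu>"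
  unfolding p_lde_eq_sum_near_words by (intro sum_nonneg Pr_nonneg)

lemma p_lde_le_1:
  fixes M :: "'a::finite stream measure"
  assumes "seq_prob M"
  shows "p_lde M l d \<epsilon> \<nu> \<le> 1"
proof -
  have "p_lde M l d \<epsilon> \<nu> \<le> (\<Sum>y\<in>{y. length y = l}. Pr M y)"
    unfolding p_lde_eq_sum_near_words
    by (rule sum_mono2[OF finite_lists_length_eq_UNIV]) (auto simp: near_words_def Pr_nonneg)
  then show ?thesis by (simp add: sum_Pr_length_eq[OF assms])
qed

lemma p_de_nonneg: "0 \<le> p_de M d \<epsilon> \<nu>"
  unfolding p_de_def by (rule Liminf_bounded) (simp add: p_lde_nonneg)

lemma p_de_le_1:
  fixes M :: "'a::finite stream measure"
  assumes "seq_prob M"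
  shows "p_de M d \<epsilon> \<nu> \<le> 1"
proof -
  have "p_de M d \<epsilon> \<nu> \<le> liminf (\<lambda>l. 1)"
    unfolding p_de_def by (rule Liminf_mono) (simp add: p_lde_le_1[OF assms])
  then show ?thesis by (simp add: Liminf_const)
qed

lemma p_de_mono:
  fixes \<nu> :: "'a::finite stream measure"
  assumes "seq_prob \<nu>" "d \<le> d'" "\<epsilon>' \<le> \<epsilon>"
  shows "p_de M d' \<epsilon>' \<nu> \<le> p_de M d \<epsilon> \<nu>"
  unfolding p_de_def p_lde_eq_sum_near_words
  by (intro Liminf_mono always_eventually allI ereal_less_eq(3)[THEN iffD2]
        sum_mono2 finite_near_words near_words_mono[OF assms] Pr_nonneg)

lemma ereal_p_nu_eq_INF:
  fixes M :: "'a::finite stream measure"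
  assumes M: "seq_prob M" and \<nu>: "seq_prob \<nu>"
  shows "ereal (p_nu M \<nu>) = (INF d. INF \<epsilon>\<in>{0<..}. p_de M d \<epsilon> \<nu>)"
proof -
  \<comment> \<open>\<open>p_de\<close> increases with \<open>\<epsilon>\<close> and decreases with \<open>d\<close>, so both limits defining \<open>p_nu\<close> are infima\<close>
  define g where "g d = (INF \<epsilon>\<in>{0<..}. p_de M d \<epsilon> \<nu>)" for d
  have ereal_real_01: "ereal (real_of_ereal x) = x" if "0 \<le> x" "x \<le> 1" for x :: ereal
    using that by (cases x) auto
  have g_bounds: "0 \<le> g d" "g d \<le> 1" for d
    unfolding g_def using p_de_le_1[OF M, of d 1 \<nu>]
    by (auto intro: INF_greatest p_de_nonneg INF_lower2[of 1])
  have "((\<lambda>\<epsilon>. p_de M d \<epsilon> \<nu>) \<longlongrightarrow> g d) (at_right 0)" for d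
    unfolding g_def by (rule tendsto_INF_at_right) (simp add: p_de_mono[OF \<nu>])
  then have "((\<lambda>\<epsilon>. real_of_ereal (p_de M d \<epsilon> \<nu>)) \<longlongrightarrow> real_of_ereal (g d)) (at_right 0)" for d
    by (intro lim_real_of_ereal) (simp add: ereal_real_01[OF g_bounds])
  then have inner: "Lim (at_right 0) (\<lambda>\<epsilon>. real_of_ereal (p_de M d \<epsilon> \<nu>)) = real_of_ereal (g d)" for d
    by (intro tendsto_Lim) simp_all
  have "decseq g"
    unfolding g_def by (intro decseq_SucI INF_mono' p_de_mono[OF \<nu>]) simp_all
  then have "g \<longlonglongrightarrow> (INF d. g d)"
    by (rule LIMSEQ_INF)
  moreover have INF_g_bounds: "0 \<le> (INF d. g d)" "(INF d. g d) \<le> 1"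
    using g_bounds by (auto intro: INF_greatest INF_lower2)
  ultimately have "(\<lambda>d. real_of_ereal (g d)) \<longlonglongrightarrow> real_of_ereal (INF d. g d)"
    by (intro lim_real_of_ereal) (simp add: ereal_real_01)
  then have "p_nu M \<nu> = real_of_ereal (INF d. g d)"
    unfolding p_nu_def inner by (rule limI)
  then show ?thesis
    using INF_g_bounds by (simp add: g_def[symmetric] ereal_real_01)
qed

lemma p_nu_le_p_de:
  fixes M :: "'a::finite stream measure"
  assumes "seq_prob M" "seq_prob \<nu>" "0 < \<epsilon>"
  shows "ereal (p_nu M \<nu>) \<le> p_de M d \<epsilon> \<nu>"
  unfolding ereal_p_nu_eq_INF[OF assms(1,2)] using assms(3) by (auto intro: INF_lower2)

lemma le_p_nu_if_le_p_de:
  fixes M :: "'a::finite stream measure"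
  assumes "seq_prob M" "seq_prob \<nu>" "\<And>d \<epsilon>. 0 < \<epsilon> \<Longrightarrow> ereal c \<le> p_de M d \<epsilon> \<nu>"
  shows "c \<le> p_nu M \<nu>"
proof -
  have "ereal c \<le> ereal (p_nu M \<nu>)"
    unfolding ereal_p_nu_eq_INF[OF assms(1,2)] by (auto intro!: INF_greatest assms(3))
  then show ?thesis by simp
qed

lemma mem_Qplus_iff:
  fixes M :: "'a::finite stream measure"
  assumes "seq_prob M"
  shows "\<nu> \<in> Qplus M \<longleftrightarrow> seq_prob \<nu> \<and> 0 < p_nu M \<nu>"
proof -
  have "0 < p_de M d \<epsilon> \<nu>" if "seq_prob \<nu>" "0 < p_nu M \<nu>" "0 < \<epsilon>" for d \<epsilon>
  proof -
    have "(0::ereal) < ereal (p_nu M \<nu>)" using that(2) by simp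
    also have "\<dots> \<le> p_de M d \<epsilon> \<nu>" by (rule p_nu_le_p_de[OF assms that(1,3)])
    finally show ?thesis .
  qed
  then show ?thesis by (auto simp: Qplus_def accumulation_state_def)
qed

section \<open>Lower bounds for the weights\<close>

lemma sum_near_words_le:
  fixes M :: "'a::finite stream measure" and g :: "'a list \<Rightarrow> real"
  assumes "finite Q" "disjoint_family_on (near_words M l d \<epsilon>) Q" "\<And>y. 0 \<le> g y"
  shows "(\<Sum>\<nu>\<in>Q. \<Sum>y\<in>near_words M l d \<epsilon> \<nu>. g y) \<le> (\<Sum>y\<in>{y. length y = l}. g y)"
proof -
  have "(\<Sum>\<nu>\<in>Q. \<Sum>y\<in>near_words M l d \<epsilon> \<nu>. g y) = (\<Sum>y\<in>(\<Union>\<nu>\<in>Q. near_words M l d \<epsilon> \<nu>). g y)"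
    using assms(1,2) by (intro sum.UNION_disjoint[symmetric]) (auto simp: finite_near_words disjoint_family_on_def)
  also have "\<dots> \<le> (\<Sum>y\<in>{y. length y = l}. g y)"
    using assms(3) by (intro sum_mono2 finite_lists_length_eq_UNIV) (auto simp: near_words_def)
  finally show ?thesis .
qed

lemma near_words_snoc:
  fixes M :: "'a::finite stream measure"
  assumes M: "seq_prob M" and \<nu>: "seq_prob \<nu>" and y: "y \<in> near_words M l (Suc d) \<epsilon>' \<nu>"
    and small: "2 * \<epsilon>' \<le> Pr \<nu> [\<sigma>]" "4 * \<epsilon>' \<le> \<epsilon> * Pr \<nu> [\<sigma>]"
  shows "y @ [\<sigma>] \<in> near_words M (Suc l) d \<epsilon> (future \<nu> [\<sigma>])"
    and "(Pr \<nu> [\<sigma>] - \<epsilon>') * Pr M y \<le> Pr M (y @ [\<sigma>])"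
proof -
  define \<mu> where "\<mu> = future M y"
  have y': "length y = l" "0 < Pr M y" "seq_prob \<mu>" "cyl_dist (Suc d) \<mu> \<nu> < \<epsilon>'"
    using y by (simp_all add: mem_near_words_iff \<mu>_def)
  have "\<bar>Pr \<mu> [\<sigma>] - Pr \<nu> [\<sigma>]\<bar> \<le> cyl_dist (Suc d) \<mu> \<nu>"
    by (rule Pr_diff_le_cyl_dist[OF y'(3) \<nu>]) simp
  then have \<mu>\<sigma>: "Pr \<nu> [\<sigma>] - \<epsilon>' < Pr \<mu> [\<sigma>]"
    using y'(4) by linarith
  have "0 < \<epsilon>'"
    using cyl_dist_nonneg y'(4) by (rule le_less_trans)
  then have pos: "0 < Pr \<nu> [\<sigma>]" "0 < Pr \<mu> [\<sigma>]" and half: "Pr \<nu> [\<sigma>] \<le> 2 * Pr \<mu> [\<sigma>]"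
    using small(1) \<mu>\<sigma> by linarith+
  have Pr_snoc: "Pr M (y @ [\<sigma>]) = Pr \<mu> [\<sigma>] * Pr M y"
    using y'(2) by (simp add: \<mu>_def Pr_future[OF M y'(2)])
  show "(Pr \<nu> [\<sigma>] - \<epsilon>') * Pr M y \<le> Pr M (y @ [\<sigma>])"
    unfolding Pr_snoc using \<mu>\<sigma> y'(2) by (intro mult_right_mono) simp_all
  have "0 < Pr M (y @ [\<sigma>])"
    unfolding Pr_snoc using pos(2) y'(2) by simp
  then have future_snoc: "future M (y @ [\<sigma>]) = future \<mu> [\<sigma>]"
    unfolding \<mu>_def by (rule future_append[OF M])
  have "cyl_dist d (future \<mu> [\<sigma>]) (future \<nu> [\<sigma>]) \<le> 2 * cyl_dist (Suc d) \<mu> \<nu> / Pr \<mu> [\<sigma>]"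
    by (rule cyl_dist_future_Cons_le[OF y'(3) pos(2) \<nu> pos(1)])
  also have "\<dots> < 4 * \<epsilon>' / (2 * Pr \<mu> [\<sigma>])"
    using y'(4) pos(2) by (simp add: divide_strict_right_mono)
  also have "\<dots> \<le> 4 * \<epsilon>' / Pr \<nu> [\<sigma>]"
    using half pos \<open>0 < \<epsilon>'\<close> by (intro divide_left_mono) simp_all
  also have "\<dots> \<le> \<epsilon>"
    using small(2) pos(1) by (simp add: pos_divide_le_eq)
  finally show "y @ [\<sigma>] \<in> near_words M (Suc l) d \<epsilon> (future \<nu> [\<sigma>])"
    using y'(1) \<open>0 < Pr M (y @ [\<sigma>])\<close> seq_prob_future[OF M \<open>0 < Pr M (y @ [\<sigma>])\<close>]
    by (simp add: mem_near_words_iff future_snoc)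
qed

lemma sum_Pr_snoc_near_words_ge:
  fixes M :: "'a::finite stream measure"
  assumes M: "seq_prob M" and \<nu>: "seq_prob \<nu>" and y: "y \<in> near_words M l (Suc d) \<epsilon>' \<nu>"
    and A: "\<And>\<sigma>. \<sigma> \<in> A \<Longrightarrow> future \<nu> [\<sigma>] = \<nu>' \<and> 2 * \<epsilon>' \<le> Pr \<nu> [\<sigma>] \<and> 4 * \<epsilon>' \<le> \<epsilon> * Pr \<nu> [\<sigma>]"
  shows "(\<Sum>\<sigma>\<in>A. Pr \<nu> [\<sigma>] - \<epsilon>') * Pr M y
    \<le> (\<Sum>\<sigma>\<in>UNIV. if y @ [\<sigma>] \<in> near_words M (Suc l) d \<epsilon> \<nu>' then Pr M (y @ [\<sigma>]) else 0)"
proof -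
  have "(\<Sum>\<sigma>\<in>A. Pr \<nu> [\<sigma>] - \<epsilon>') * Pr M y = (\<Sum>\<sigma>\<in>A. (Pr \<nu> [\<sigma>] - \<epsilon>') * Pr M y)"
    by (simp add: sum_distrib_right)
  also have "\<dots> \<le> (\<Sum>\<sigma>\<in>A. if y @ [\<sigma>] \<in> near_words M (Suc l) d \<epsilon> \<nu>' then Pr M (y @ [\<sigma>]) else 0)"
  proof (intro sum_mono)
    fix \<sigma> assume "\<sigma> \<in> A"
    then have \<sigma>: "future \<nu> [\<sigma>] = \<nu>'" "2 * \<epsilon>' \<le> Pr \<nu> [\<sigma>]" "4 * \<epsilon>' \<le> \<epsilon> * Pr \<nu> [\<sigma>]"
      using A by simp_all
    show "(Pr \<nu> [\<sigma>] - \<epsilon>') * Pr M y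
      \<le> (if y @ [\<sigma>] \<in> near_words M (Suc l) d \<epsilon> \<nu>' then Pr M (y @ [\<sigma>]) else 0)"
      using near_words_snoc[OF M \<nu> y \<sigma>(2,3)] \<sigma>(1) by simp
  qed
  also have "\<dots> \<le> (\<Sum>\<sigma>\<in>UNIV. if y @ [\<sigma>] \<in> near_words M (Suc l) d \<epsilon> \<nu>' then Pr M (y @ [\<sigma>]) else 0)"
    by (intro sum_mono2) (simp_all add: Pr_nonneg)
  finally show ?thesis .
qed

lemma sum_p_lde_le_p_lde_Suc:
  fixes M :: "'a::finite stream measure"
  assumes M: "seq_prob M" and Q: "finite Q" "\<And>\<nu>. \<nu> \<in> Q \<Longrightarrow> seq_prob \<nu>"
    and disj: "disjoint_family_on (near_words M l (Suc d) \<epsilon>') Q"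
    and A: "\<And>\<nu> \<sigma>. \<nu> \<in> Q \<Longrightarrow> \<sigma> \<in> A \<nu> \<Longrightarrow>
              future \<nu> [\<sigma>] = \<nu>' \<and> 2 * \<epsilon>' \<le> Pr \<nu> [\<sigma>] \<and> 4 * \<epsilon>' \<le> \<epsilon> * Pr \<nu> [\<sigma>]"
  shows "(\<Sum>\<nu>\<in>Q. (\<Sum>\<sigma>\<in>A \<nu>. Pr \<nu> [\<sigma>] - \<epsilon>') * p_lde M l (Suc d) \<epsilon>' \<nu>) \<le> p_lde M (Suc l) d \<epsilon> \<nu>'"
proof -
  define N' where "N' = near_words M (Suc l) d \<epsilon> \<nu>'"
  define g where "g y = (\<Sum>\<sigma>\<in>UNIV. if y @ [\<sigma>] \<in> N' then Pr M (y @ [\<sigma>]) else 0)" for y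
  have g_ge: "(\<Sum>\<sigma>\<in>A \<nu>. Pr \<nu> [\<sigma>] - \<epsilon>') * Pr M y \<le> g y"
    if "\<nu> \<in> Q" "y \<in> near_words M l (Suc d) \<epsilon>' \<nu>" for \<nu> y
    unfolding g_def N'_def using that by (intro sum_Pr_snoc_near_words_ge[OF M Q(2)] A)
  have "(\<Sum>\<nu>\<in>Q. (\<Sum>\<sigma>\<in>A \<nu>. Pr \<nu> [\<sigma>] - \<epsilon>') * p_lde M l (Suc d) \<epsilon>' \<nu>)
      = (\<Sum>\<nu>\<in>Q. \<Sum>y\<in>near_words M l (Suc d) \<epsilon>' \<nu>. (\<Sum>\<sigma>\<in>A \<nu>. Pr \<nu> [\<sigma>] - \<epsilon>') * Pr M y)"
    by (simp add: p_lde_eq_sum_near_words sum_distrib_left)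
  also have "\<dots> \<le> (\<Sum>\<nu>\<in>Q. \<Sum>y\<in>near_words M l (Suc d) \<epsilon>' \<nu>. g y)"
    by (intro sum_mono g_ge)
  also have "\<dots> \<le> (\<Sum>y\<in>{y. length y = l}. g y)"
    by (rule sum_near_words_le[OF Q(1) disj]) (simp add: g_def sum_nonneg Pr_nonneg)
  also have "\<dots> = (\<Sum>z\<in>{z. length z = Suc l}. if z \<in> N' then Pr M z else 0)"
    unfolding g_def by (rule sum_length_eq_snoc)
  also have "\<dots> = (\<Sum>z\<in>{z. length z = Suc l} \<inter> N'. Pr M z)"
    by (simp add: sum.inter_restrict finite_lists_length_eq_UNIV)
  also have "{z. length z = Suc l} \<inter> N' = N'"
    by (auto simp: N'_def near_words_def)
  finally show ?thesis
    by (simp add: p_lde_eq_sum_near_words N'_def)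
qed

lemma sum_p_lde_le_Pr:
  fixes M :: "'a::finite stream measure"
  assumes M: "seq_prob M" "stationary_proc M" and Q: "finite Q" "\<And>\<nu>. \<nu> \<in> Q \<Longrightarrow> seq_prob \<nu>"
    and disj: "disjoint_family_on (near_words M l d \<epsilon>) Q" and x: "length x \<le> d"
  shows "(\<Sum>\<nu>\<in>Q. max 0 (Pr \<nu> x - \<epsilon>) * p_lde M l d \<epsilon> \<nu>) \<le> Pr M x"
proof -
  have "max 0 (Pr \<nu> x - \<epsilon>) * Pr M y \<le> Pr M (y @ x)"
    if \<nu>: "\<nu> \<in> Q" and "y \<in> near_words M l d \<epsilon> \<nu>" for \<nu> y
  proof -
    have y: "0 < Pr M y" "seq_prob (future M y)" "cyl_dist d (future M y) \<nu> < \<epsilon>"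
      using that(2) by (simp_all add: mem_near_words_iff)
    have "\<bar>Pr (future M y) x - Pr \<nu> x\<bar> \<le> cyl_dist d (future M y) \<nu>"
      by (rule Pr_diff_le_cyl_dist[OF y(2) Q(2)[OF \<nu>] x])
    then have "max 0 (Pr \<nu> x - \<epsilon>) \<le> Pr (future M y) x"
      using y(3) Pr_nonneg[of "future M y" x] by (intro max.boundedI) linarith+
    then have "max 0 (Pr \<nu> x - \<epsilon>) * Pr M y \<le> Pr (future M y) x * Pr M y"
      using y(1) by (intro mult_right_mono) simp_all
    also have "\<dots> = Pr M (y @ x)"
      using y(1) by (simp add: Pr_future[OF M(1) y(1)])
    finally show ?thesis .
  qed
  then have "(\<Sum>\<nu>\<in>Q. max 0 (Pr \<nu> x - \<epsilon>) * p_lde M l d \<epsilon> \<nu>)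
      \<le> (\<Sum>\<nu>\<in>Q. \<Sum>y\<in>near_words M l d \<epsilon> \<nu>. Pr M (y @ x))"
    unfolding p_lde_eq_sum_near_words sum_distrib_left by (intro sum_mono)
  also have "\<dots> \<le> (\<Sum>y\<in>{y. length y = l}. Pr M (y @ x))"
    by (rule sum_near_words_le[OF Q(1) disj Pr_nonneg])
  also have "\<dots> = Pr M x"
    by (rule Pr_eq_sum_prepend[OF M, symmetric])
  finally show ?thesis .
qed

lemma trans_mat_G_eq:
  fixes \<nu> :: "'a::finite stream measure"
  shows "trans_mat G_delta G_pit \<nu> \<nu>' = (\<Sum>\<sigma>\<in>{\<sigma>. 0 < Pr \<nu> [\<sigma>] \<and> future \<nu> [\<sigma>] = \<nu>'}. Pr \<nu> [\<sigma>])"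
  unfolding trans_mat_def G_delta_def G_pit_def
  by (rule sum.mono_neutral_right) (auto intro: antisym Pr_nonneg simp: not_less)

lemma sum_trans_mat_G_eq_1:
  fixes \<nu> :: "'a::finite stream measure"
  assumes "seq_prob \<nu>" "finite Q" "\<And>\<sigma>. 0 < Pr \<nu> [\<sigma>] \<Longrightarrow> future \<nu> [\<sigma>] \<in> Q"
  shows "(\<Sum>\<nu>'\<in>Q. trans_mat G_delta G_pit \<nu> \<nu>') = 1"
proof -
  have "(\<Sum>\<nu>'\<in>Q. trans_mat G_delta G_pit \<nu> \<nu>') = (\<Sum>\<sigma>\<in>(\<Union>\<nu>'\<in>Q. {\<sigma>. future \<nu> [\<sigma>] = \<nu>'}). Pr \<nu> [\<sigma>])"
    unfolding trans_mat_def G_delta_def G_pit_def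
    by (rule sum.UNION_disjoint[symmetric]) (use assms(2) in auto)
  also have "\<dots> = (\<Sum>\<sigma>\<in>UNIV. Pr \<nu> [\<sigma>])"
  proof (rule sum.mono_neutral_left)
    show "\<forall>\<sigma>\<in>UNIV - (\<Union>\<nu>'\<in>Q. {\<sigma>. future \<nu> [\<sigma>] = \<nu>'}). Pr \<nu> [\<sigma>] = 0"
      using assms(3) Pr_nonneg[of \<nu>] by (force simp: order_le_less)
  qed simp_all
  also have "\<dots> = 1"
    by (rule sum_Pr_letters[OF assms(1)])
  finally show ?thesis .
qed

lemma ereal_sum_p_nu_le_p_de:
  fixes M :: "'a::finite stream measure"
  assumes M: "seq_prob M" and Q: "finite Q" "\<And>\<nu>. \<nu> \<in> Q \<Longrightarrow> seq_prob \<nu>"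
    and disj: "\<And>l. disjoint_family_on (near_words M l (Suc d) \<epsilon>') Q" and "0 < \<epsilon>'"
    and A: "\<And>\<nu> \<sigma>. \<nu> \<in> Q \<Longrightarrow> \<sigma> \<in> A \<nu> \<Longrightarrow>
              future \<nu> [\<sigma>] = \<nu>' \<and> 2 * \<epsilon>' \<le> Pr \<nu> [\<sigma>] \<and> 4 * \<epsilon>' \<le> \<epsilon> * Pr \<nu> [\<sigma>]"
  shows "ereal (\<Sum>\<nu>\<in>Q. (\<Sum>\<sigma>\<in>A \<nu>. Pr \<nu> [\<sigma>] - \<epsilon>') * p_nu M \<nu>) \<le> p_de M d \<epsilon> \<nu>'"
proof -
  have "ereal (\<Sum>\<nu>\<in>Q. (\<Sum>\<sigma>\<in>A \<nu>. Pr \<nu> [\<sigma>] - \<epsilon>') * p_nu M \<nu>)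
      \<le> liminf (\<lambda>l. ereal (p_lde M (Suc l) d \<epsilon> \<nu>'))"
  proof (rule ereal_sum_mult_le_liminf)
    show "0 \<le> (\<Sum>\<sigma>\<in>A \<nu>. Pr \<nu> [\<sigma>] - \<epsilon>')" if "\<nu> \<in> Q" for \<nu>
      using A[OF that] \<open>0 < \<epsilon>'\<close> by (intro sum_nonneg) force
    show "ereal (p_nu M \<nu>) \<le> liminf (\<lambda>l. ereal (p_lde M l (Suc d) \<epsilon>' \<nu>))" if "\<nu> \<in> Q" for \<nu>
      using p_nu_le_p_de[OF M Q(2)[OF that] \<open>0 < \<epsilon>'\<close>] by (simp add: p_de_def)
    show "(\<Sum>\<nu>\<in>Q. (\<Sum>\<sigma>\<in>A \<nu>. Pr \<nu> [\<sigma>] - \<epsilon>') * p_lde M l (Suc d) \<epsilon>' \<nu>) \<le> p_lde M (Suc l) d \<epsilon> \<nu>'"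
      for l
      by (rule sum_p_lde_le_p_lde_Suc[OF M Q disj A])
  qed (simp add: p_lde_nonneg)
  then show ?thesis
    using liminf_shift[of "\<lambda>l. ereal (p_lde M l d \<epsilon> \<nu>')"] by (simp add: p_de_def)
qed

lemma sum_p_nu_trans_mat_le:
  fixes M :: "'a::finite stream measure"
  assumes M: "seq_prob M" and Q: "finite Q" "\<And>\<nu>. \<nu> \<in> Q \<Longrightarrow> seq_prob \<nu>" and \<nu>': "seq_prob \<nu>'"
  shows "(\<Sum>\<nu>\<in>Q. p_nu M \<nu> * trans_mat G_delta G_pit \<nu> \<nu>') \<le> p_nu M \<nu>'"
proof -
  define A where "A \<nu> = {\<sigma>. 0 < Pr \<nu> [\<sigma>] \<and> future \<nu> [\<sigma>] = \<nu>'}" for \<nu>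
  define F where "F \<epsilon>' = (\<Sum>\<nu>\<in>Q. (\<Sum>\<sigma>\<in>A \<nu>. Pr \<nu> [\<sigma>] - \<epsilon>') * p_nu M \<nu>)" for \<epsilon>'
  obtain \<epsilon>0 D where "0 < \<epsilon>0" and disj:
    "\<And>M l d \<epsilon>. D \<le> d \<Longrightarrow> \<epsilon> \<le> \<epsilon>0 \<Longrightarrow> disjoint_family_on (near_words M l d \<epsilon>) Q"
    using near_words_disjoint_family[OF Q] by metis
  have "(F \<longlongrightarrow> F 0) (at_right 0)"
    unfolding F_def by (intro tendsto_intros)
  moreover have "F 0 = (\<Sum>\<nu>\<in>Q. p_nu M \<nu> * trans_mat G_delta G_pit \<nu> \<nu>')"
    by (simp add: F_def A_def trans_mat_G_eq mult.commute)
  ultimately have F_lim: "((\<lambda>\<epsilon>'. ereal (F \<epsilon>')) \<longlongrightarrow> ereal (\<Sum>\<nu>\<in>Q. p_nu M \<nu> * trans_mat G_delta G_pit \<nu> \<nu>')) (at_right 0)"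
    by (simp add: tendsto_ereal)
  have "ereal (\<Sum>\<nu>\<in>Q. p_nu M \<nu> * trans_mat G_delta G_pit \<nu> \<nu>') \<le> p_de M d \<epsilon> \<nu>'" if "0 < \<epsilon>" for d \<epsilon>
  proof -
    define d' where "d' = max d D"
    have "eventually (\<lambda>\<epsilon>'. 2 * \<epsilon>' \<le> Pr \<nu> [\<sigma>] \<and> 4 * \<epsilon>' \<le> \<epsilon> * Pr \<nu> [\<sigma>]) (at_right 0)"
      if "\<sigma> \<in> A \<nu>" for \<nu> \<sigma>
    proof -
      have "0 < min (Pr \<nu> [\<sigma>] / 2) (\<epsilon> * Pr \<nu> [\<sigma>] / 4)"
        using that \<open>0 < \<epsilon>\<close> by (simp add: A_def)
      from eventually_at_right_real[OF this] show ?thesis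
        by (rule eventually_mono) (simp add: field_simps)
    qed
    then have "eventually (\<lambda>\<epsilon>'. \<epsilon>' \<in> {0<..<\<epsilon>0} \<and>
        (\<forall>\<nu>\<in>Q. \<forall>\<sigma>\<in>A \<nu>. 2 * \<epsilon>' \<le> Pr \<nu> [\<sigma>] \<and> 4 * \<epsilon>' \<le> \<epsilon> * Pr \<nu> [\<sigma>])) (at_right 0)"
      using eventually_at_right_real[OF \<open>0 < \<epsilon>0\<close>]
      by (simp add: eventually_conj_iff eventually_ball_finite_distrib Q(1))
    then have "eventually (\<lambda>\<epsilon>'. ereal (F \<epsilon>') \<le> p_de M d' \<epsilon> \<nu>') (at_right 0)"
      unfolding F_def
      by (rule eventually_mono, intro ereal_sum_p_nu_le_p_de[OF M Q disj])
         (auto simp: d'_def A_def)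
    then have "ereal (\<Sum>\<nu>\<in>Q. p_nu M \<nu> * trans_mat G_delta G_pit \<nu> \<nu>') \<le> p_de M d' \<epsilon> \<nu>'"
      by (rule tendsto_upperbound[OF F_lim]) simp
    also have "\<dots> \<le> p_de M d \<epsilon> \<nu>'"
      by (rule p_de_mono[OF \<nu>']) (simp_all add: d'_def)
    finally show ?thesis .
  qed
  then show ?thesis
    by (rule le_p_nu_if_le_p_de[OF M \<nu>'])
qed

lemma sum_max_mult_p_nu_le_Pr:
  fixes M :: "'a::finite stream measure"
  assumes M: "seq_prob M" "stationary_proc M" and Q: "finite Q" "\<And>\<nu>. \<nu> \<in> Q \<Longrightarrow> seq_prob \<nu>"
    and disj: "\<And>l. disjoint_family_on (near_words M l d \<epsilon>) Q" and "length x \<le> d" "0 < \<epsilon>"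
  shows "(\<Sum>\<nu>\<in>Q. max 0 (Pr \<nu> x - \<epsilon>) * p_nu M \<nu>) \<le> Pr M x"
proof -
  have "ereal (\<Sum>\<nu>\<in>Q. max 0 (Pr \<nu> x - \<epsilon>) * p_nu M \<nu>) \<le> liminf (\<lambda>l. ereal (Pr M x))"
  proof (rule ereal_sum_mult_le_liminf)
    show "ereal (p_nu M \<nu>) \<le> liminf (\<lambda>l. ereal (p_lde M l d \<epsilon> \<nu>))" if "\<nu> \<in> Q" for \<nu>
      using p_nu_le_p_de[OF M(1) Q(2)[OF that] \<open>0 < \<epsilon>\<close>] by (simp add: p_de_def)
    show "(\<Sum>\<nu>\<in>Q. max 0 (Pr \<nu> x - \<epsilon>) * p_lde M l d \<epsilon> \<nu>) \<le> Pr M x" for l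
      by (rule sum_p_lde_le_Pr[OF M Q disj \<open>length x \<le> d\<close>])
  qed (simp_all add: p_lde_nonneg)
  then show ?thesis
    by (simp add: Liminf_const)
qed

lemma sum_p_nu_Pr_le:
  fixes M :: "'a::finite stream measure"
  assumes M: "seq_prob M" "stationary_proc M" and Q: "finite Q" "\<And>\<nu>. \<nu> \<in> Q \<Longrightarrow> seq_prob \<nu>"
  shows "(\<Sum>\<nu>\<in>Q. p_nu M \<nu> * Pr \<nu> x) \<le> Pr M x"
proof -
  define F where "F \<epsilon> = (\<Sum>\<nu>\<in>Q. max 0 (Pr \<nu> x - \<epsilon>) * p_nu M \<nu>)" for \<epsilon>
  obtain \<epsilon>0 D where "0 < \<epsilon>0" and disj:
    "\<And>M l d \<epsilon>. D \<le> d \<Longrightarrow> \<epsilon> \<le> \<epsilon>0 \<Longrightarrow> disjoint_family_on (near_words M l d \<epsilon>) Q"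
    using near_words_disjoint_family[OF Q] by metis
  have "(F \<longlongrightarrow> F 0) (at_right 0)"
    unfolding F_def by (intro tendsto_intros)
  moreover have "F 0 = (\<Sum>\<nu>\<in>Q. p_nu M \<nu> * Pr \<nu> x)"
    by (simp add: F_def Pr_nonneg mult.commute)
  ultimately have F_lim: "(F \<longlongrightarrow> (\<Sum>\<nu>\<in>Q. p_nu M \<nu> * Pr \<nu> x)) (at_right 0)"
    by simp
  have "eventually (\<lambda>\<epsilon>. F \<epsilon> \<le> Pr M x) (at_right 0)"
    using eventually_at_right_real[OF \<open>0 < \<epsilon>0\<close>] unfolding F_def
    by (rule eventually_mono, intro sum_max_mult_p_nu_le_Pr[OF M Q disj, of "max D (length x)"]) auto
  then show ?thesis
    by (rule tendsto_upperbound[OF F_lim]) simp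
qed

lemma Pr_eq_sum_p_nu_Pr:
  fixes M :: "'a::finite stream measure"
  assumes M: "seq_prob M" "stationary_proc M" and Q: "finite Q" "\<And>\<nu>. \<nu> \<in> Q \<Longrightarrow> seq_prob \<nu>"
    and one: "(\<Sum>\<nu>\<in>Q. p_nu M \<nu>) = 1"
  shows "Pr M x = (\<Sum>\<nu>\<in>Q. p_nu M \<nu> * Pr \<nu> x)"
proof -
  define W where "W = {w :: 'a list. length w = length x}"
  have "(\<Sum>w\<in>W. \<Sum>\<nu>\<in>Q. p_nu M \<nu> * Pr \<nu> w) = (\<Sum>\<nu>\<in>Q. p_nu M \<nu> * (\<Sum>w\<in>W. Pr \<nu> w))"
    by (simp add: sum.swap[of _ W] sum_distrib_left)
  also have "\<dots> = (\<Sum>w\<in>W. Pr M w)"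
    using one by (simp add: W_def sum_Pr_length_eq Q(2) M(1))
  finally have "(\<Sum>\<nu>\<in>Q. p_nu M \<nu> * Pr \<nu> x) = Pr M x"
    by (rule sum_mono_inv) (simp_all add: sum_p_nu_Pr_le[OF M Q] W_def finite_lists_length_eq_UNIV)
  then show ?thesis ..
qed

lemma future_mem_Qplus:
  fixes M :: "'a::finite stream measure"
  assumes M: "seq_prob M" and \<nu>: "\<nu> \<in> Qplus M" and \<sigma>: "0 < Pr \<nu> [\<sigma>]"
  shows "future \<nu> [\<sigma>] \<in> Qplus M"
proof -
  have "seq_prob \<nu>" "0 < p_nu M \<nu>"
    using \<nu> by (simp_all add: mem_Qplus_iff[OF M])
  have \<nu>\<sigma>: "seq_prob (future \<nu> [\<sigma>])"
    by (rule seq_prob_future[OF \<open>seq_prob \<nu>\<close> \<sigma>])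
  have "Pr \<nu> [\<sigma>] \<le> trans_mat G_delta G_pit \<nu> (future \<nu> [\<sigma>])"
    unfolding trans_mat_G_eq using \<sigma> by (intro member_le_sum) (simp_all add: Pr_nonneg)
  then have "0 < p_nu M \<nu> * trans_mat G_delta G_pit \<nu> (future \<nu> [\<sigma>])"
    using \<sigma> \<open>0 < p_nu M \<nu>\<close> by simp
  also have "\<dots> \<le> p_nu M (future \<nu> [\<sigma>])"
    using sum_p_nu_trans_mat_le[OF M _ _ \<nu>\<sigma>, of "{\<nu>}"] \<open>seq_prob \<nu>\<close> by simp
  finally show ?thesis
    using \<nu>\<sigma> by (simp add: mem_Qplus_iff[OF M])
qed

lemma stationary_dist_p_nu:
  fixes M :: "'a::finite stream measure"
  assumes M: "seq_prob M" and fin: "finite (Qplus M)" and one: "(\<Sum>\<nu>\<in>Qplus M. p_nu M \<nu>) = 1"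
  shows "stationary_dist (Qplus M) (trans_mat G_delta G_pit) (p_nu M)"
proof -
  have Q: "seq_prob \<nu>" "0 < p_nu M \<nu>" if "\<nu> \<in> Qplus M" for \<nu>
    using that by (simp_all add: mem_Qplus_iff[OF M])
  have le: "(\<Sum>\<nu>\<in>Qplus M. p_nu M \<nu> * trans_mat G_delta G_pit \<nu> \<nu>') \<le> p_nu M \<nu>'"
    if "\<nu>' \<in> Qplus M" for \<nu>'
    using sum_p_nu_trans_mat_le[OF M fin] Q(1) that by blast
  have "(\<Sum>\<nu>'\<in>Qplus M. \<Sum>\<nu>\<in>Qplus M. p_nu M \<nu> * trans_mat G_delta G_pit \<nu> \<nu>') = sum (p_nu M) (Qplus M)"
    using fin Q(1) future_mem_Qplus[OF M]
    by (simp add: sum.swap[of _ "Qplus M"] sum_distrib_left[symmetric] sum_trans_mat_G_eq_1)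
  then have "(\<Sum>\<nu>\<in>Qplus M. p_nu M \<nu> * trans_mat G_delta G_pit \<nu> \<nu>') = p_nu M \<nu>'"
    if "\<nu>' \<in> Qplus M" for \<nu>'
    using le that fin by (rule sum_mono_inv)
  then show ?thesis
    using Q(2) one by (simp add: stationary_dist_def less_imp_le)
qed

theorem mainTheorem5:
  fixes M :: "('a::finite) stream measure"
  assumes "seq_prob M"
    and "stationary_proc M"
    and "ergodic_proc M"
    and "finite (Qplus M)"
    and "(\<Sum>\<nu>\<in>Qplus M. p_nu M \<nu>) = 1"
  shows "(\<forall>\<nu>\<in>Qplus M. \<forall>\<sigma>. G_pit \<nu> \<sigma> > 0 \<longrightarrow> G_delta \<nu> \<sigma> \<in> Qplus M)
    \<and> stationary_dist (Qplus M) (trans_mat G_delta G_pit) (p_nu M)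
    \<and> (\<forall>x. Pr M x = (\<Sum>\<nu>\<in>Qplus M. p_nu M \<nu> * word_prob G_delta G_pit \<nu> x))"
proof -
  have seq_prob_Q: "\<And>\<nu>. \<nu> \<in> Qplus M \<Longrightarrow> seq_prob \<nu>"
    by (simp add: mem_Qplus_iff[OF assms(1)])
  have "Pr M x = (\<Sum>\<nu>\<in>Qplus M. p_nu M \<nu> * word_prob G_delta G_pit \<nu> x)" for x
    using Pr_eq_sum_p_nu_Pr[OF assms(1,2,4) seq_prob_Q assms(5)] seq_prob_Q
    by (simp add: word_prob_G_eq_Pr)
  then show ?thesis
    using future_mem_Qplus[OF assms(1)] stationary_dist_p_nu[OF assms(1,4,5)]
    by (simp add: G_pit_def G_delta_def)
qed

end
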